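(* Let $X$ be a real normed space, $f:X\to\mathbb R\cup\{+\infty\}$ proper, $\bar x\in(\partial f)^{-1}(0)$, and $p,q\in(1,\infty)$ with $p^{-1}+q^{-1}=1$. (i) Suppose there exist $\beta\in(0,+\infty]$, $\kappa\in(0,+\infty)$ and a dense subset $\mathcal W$ of $\mathbb B_*(0,\beta)$ such that for every $\xi\in\mathcal W$ there is $x\in X$ with $\xi\in\partial f(x)$ and $\|x-\bar x\|\le\kappa\|\xi\|^{q/p}$. Then for every $\delta\in(0,+\infty)$, $$f(x)\ge f(\bar x)+\frac12\min\Big\{\frac{\beta}{\delta^{p/q}},\frac{1}{(2\kappa)^{p/q}}\Big\}\|x-\bar x\|^p\quad\text{for all }x\in\mathbb B(\bar x,\delta).$$ (ii) Suppose $\partial f$ is strongly $\frac qp$-subregular at $\bar x$ with parameters $\alpha\in(0,+\infty]$ and $\kappa\in(0,+\infty)$. Then $$f(x)\ge f(\bar x)+\frac{1}{2(2\kappa)^{p/q}}\|x-\bar x\|^p\quad\text{for all }x\in\bar x+2\kappa\,J_p^{-1}\Big(\overline{\partial f(\mathbb B(\bar x,\alpha))}\Big).$$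
   Context: $\partial f(x):=\{\xi\in X^*: x\text{ is a global minimizer of } f-\langle\xi,\cdot\rangle\}$ (Fenchel–Moreau subdifferential, $f$ possibly nonconvex); $(\partial f)^{-1}(0)=\{x:0\in\partial f(x)\}$; $\partial f(A)=\bigcup_{x\in A}\partial f(x)$. $\mathbb B(x,r)$ and $\mathbb B_*(\xi,r)$ are closed balls in $X$ and $X^*$, with $\mathbb B(x,+\infty)=X$. Duality mapping: $J_p(x):=\{\xi\in X^*:\langle\xi,x\rangle=\|\xi\|\|x\|,\ \|\xi\|=\|x\|^{p-1}\}$, and $J_p^{-1}(A):=\{x: J_p(x)\cap A\ne\emptyset\}$. A set-valued map $\mathcal F:X\rightrightarrows Y$ is strongly $\lambda$-subregular at $\bar x\in\mathcal F^{-1}(0)$ with parameters $\alpha\in(0,+\infty]$, $\kappa\in(0,+\infty)$ if $\|x-\bar x\|\le\kappa\, d(0,\mathcal F(x))^\lambda$ for all $x\in\mathbb B(\bar x,\alpha)$, where $d(0,\mathcal F(x))=\inf\{\|y\|:y\in\mathcal F(x)\}$ ($=+\infty$ if $\mathcal F(x)=\emptyset$). *)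

theory Defs
  imports "HOL-Analysis.Analysis" "HOL-Library.Extended_Real"
begin

definition subdiff :: "('a::real_normed_vector \<Rightarrow> ereal) \<Rightarrow> 'a \<Rightarrow> ('a \<Rightarrow>\<^sub>L real) set" where
  "subdiff f x = {\<xi>. \<forall>y. f x - ereal (blinfun_apply \<xi> x) \<le> f y - ereal (blinfun_apply \<xi> y)}"

definition proper_fun :: "('a \<Rightarrow> ereal) \<Rightarrow> bool" where
  "proper_fun f \<longleftrightarrow> (\<forall>x. f x \<noteq> -\<infinity>) \<and> (\<exists>x. f x \<noteq> \<infinity>)"

text \<open>Closed ball with possibly infinite radius (radius \<infinity> gives the whole space).\<close>
definition ecball :: "'a::real_normed_vector \<Rightarrow> ereal \<Rightarrow> 'a set" where
  "ecball c r = {x. ereal (norm (x - c)) \<le> r}"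

definition dual_map :: "real \<Rightarrow> 'a::real_normed_vector \<Rightarrow> ('a \<Rightarrow>\<^sub>L real) set" where
  "dual_map p x = {\<xi>. blinfun_apply \<xi> x = norm \<xi> * norm x \<and> norm \<xi> = norm x powr (p - 1)}"

definition dual_map_inv :: "real \<Rightarrow> ('a::real_normed_vector \<Rightarrow>\<^sub>L real) set \<Rightarrow> 'a set" where
  "dual_map_inv p A = {x. dual_map p x \<inter> A \<noteq> {}}"

text \<open>d(0, F x) = inf of norms, +\<infinity> if F x is empty.\<close>
definition dist0 :: "('a \<Rightarrow> 'b::real_normed_vector set) \<Rightarrow> 'a \<Rightarrow> ereal" where
  "dist0 F x = (INF y\<in>F x. ereal (norm y))"

definition epowr :: "ereal \<Rightarrow> real \<Rightarrow> ereal" where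
  "epowr d l = (case d of ereal r \<Rightarrow> ereal (r powr l) | PInfty \<Rightarrow> \<infinity> | MInfty \<Rightarrow> 0)"

definition strongly_subregular ::
  "('a::real_normed_vector \<Rightarrow> 'b::real_normed_vector set) \<Rightarrow> 'a \<Rightarrow> real \<Rightarrow> ereal \<Rightarrow> real \<Rightarrow> bool" where
  "strongly_subregular F xbar l \<alpha> \<kappa> \<longleftrightarrow>
     0 \<in> F xbar \<and> \<alpha> > 0 \<and> \<kappa> > 0 \<and>
     (\<forall>x\<in>ecball xbar \<alpha>. ereal (norm (x - xbar)) \<le> ereal \<kappa> * epowr (dist0 F x) l)"

end

theory Submission
  imports Defs
begin

text \<open>If \<eta> \<in> \<partial>f(y) with \<parallel>y - xbar\<parallel> \<le> \<kappa>\<parallel>\<eta>\<parallel>^(q-1), then, since xbar minimizes f,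
  f x \<ge> f y + \<eta>(x - y) \<ge> f xbar + \<eta>(x - xbar) - \<kappa>\<parallel>\<eta>\<parallel>^q for every x, and this bound
  survives passing to the closure of such subgradients. Both growth estimates come from
  evaluating it at a suitable functional: in (i) at t g, where g norms x - xbar (Hahn--Banach)
  and t \<le> \<beta> is chosen near the maximizer of t \<parallel>x - xbar\<parallel> - \<kappa> t^q; in (ii) at an element of
  J_p((x - xbar) / 2\<kappa>), for which the bound is exactly \<kappa>\<parallel>(x - xbar) / 2\<kappa>\<parallel>^p.\<close>

text \<open>Partial linear functionals are represented by their graphs, so that chains can be
  joined by union.\<close>

definition norming_graph :: "'a::real_normed_vector \<Rightarrow> ('a \<times> real) set \<Rightarrow> bool" where
  "norming_graph h G \<longleftrightarrow>
     (\<forall>x a b. (x, a) \<in> G \<longrightarrow> (x, b) \<in> G \<longrightarrow> a = b) \<and>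
     (\<forall>x a y b. (x, a) \<in> G \<longrightarrow> (y, b) \<in> G \<longrightarrow> (x + y, a + b) \<in> G) \<and>
     (\<forall>x a c. (x, a) \<in> G \<longrightarrow> (c *\<^sub>R x, c * a) \<in> G) \<and>
     (\<forall>x a. (x, a) \<in> G \<longrightarrow> a \<le> norm x) \<and>
     (h, norm h) \<in> G"

lemma norming_graphD:
  assumes "norming_graph h G"
  shows norming_graph_unique: "(x, a) \<in> G \<Longrightarrow> (x, b) \<in> G \<Longrightarrow> a = b"
    and norming_graph_add: "(x, a) \<in> G \<Longrightarrow> (y, b) \<in> G \<Longrightarrow> (x + y, a + b) \<in> G"
    and norming_graph_scaleR: "(x, a) \<in> G \<Longrightarrow> (c *\<^sub>R x, c * a) \<in> G"
    and norming_graph_le_norm: "(x, a) \<in> G \<Longrightarrow> a \<le> norm x"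
    and norming_graph_base: "(h, norm h) \<in> G"
  using assms unfolding norming_graph_def by blast+

lemma norming_graph_span: "norming_graph h {(c *\<^sub>R h, c * norm h) | c. True}"
proof -
  have "c = d" if "c *\<^sub>R h = d *\<^sub>R h" "h \<noteq> 0" for c d :: real
    using that by (metis scaleR_cancel_right)
  moreover have "c * norm h \<le> norm (c *\<^sub>R h)" for c
    by (simp add: mult_right_mono)
  moreover have "\<exists>e. c *\<^sub>R h + d *\<^sub>R h = e *\<^sub>R h \<and> c * norm h + d * norm h = e * norm h" for c d
    by (rule exI[of _ "c + d"]) (simp add: algebra_simps)
  moreover have "\<exists>e. a *\<^sub>R c *\<^sub>R h = e *\<^sub>R h \<and> a * (c * norm h) = e * norm h" for a c
    by (rule exI[of _ "a * c"]) simp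
  ultimately show ?thesis
    unfolding norming_graph_def by (auto intro: exI[of _ 1])
qed

lemma norming_graph_Union_chain:
  assumes "C \<noteq> {}" and "subset.chain {G. norming_graph h G} C"
  shows "norming_graph h (\<Union>C)"
proof -
  have graphs: "\<And>G. G \<in> C \<Longrightarrow> norming_graph h G"
    using assms(2) unfolding subset_chain_def by auto
  have common: "\<exists>G\<in>C. (x, a) \<in> G \<and> (y, b) \<in> G" if "(x, a) \<in> \<Union>C" "(y, b) \<in> \<Union>C" for x a y b
    using that assms(2) unfolding subset_chain_def by blast
  obtain G0 where "G0 \<in> C" using assms(1) by auto
  show ?thesis
    unfolding norming_graph_def
  proof (intro conjI allI impI)
    show "a = b" if "(x, a) \<in> \<Union>C" "(x, b) \<in> \<Union>C" for x a b
      using common[OF that] graphs norming_graph_unique by metis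
    show "(x + y, a + b) \<in> \<Union>C" if "(x, a) \<in> \<Union>C" "(y, b) \<in> \<Union>C" for x a y b
      using common[OF that] graphs norming_graph_add by blast
    show "(c *\<^sub>R x, c * a) \<in> \<Union>C" if "(x, a) \<in> \<Union>C" for x a c
      using that graphs norming_graph_scaleR by blast
    show "a \<le> norm x" if "(x, a) \<in> \<Union>C" for x a
      using that graphs norming_graph_le_norm by blast
    show "(h, norm h) \<in> \<Union>C"
      using \<open>G0 \<in> C\<close> graphs norming_graph_base by blast
  qed
qed

text \<open>The one-dimensional step of Hahn--Banach: a value for the new direction y compatible
  with the norm bound exists because v - \<parallel>x - y\<parallel> \<le> \<parallel>x' + y\<parallel> - v' by subadditivity.\<close>

lemma norming_graph_extension_value:
  assumes "norming_graph h G"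
  obtains a where "\<And>x v. (x, v) \<in> G \<Longrightarrow> v - norm (x - y) \<le> a"
    and "\<And>x v. (x, v) \<in> G \<Longrightarrow> a \<le> norm (x + y) - v"
proof -
  define L where "L = {v - norm (x - y) | x v. (x, v) \<in> G}"
  have sep: "l \<le> norm (x' + y) - v'" if "l \<in> L" "(x', v') \<in> G" for l x' v'
  proof -
    obtain x v where xv: "(x, v) \<in> G" "l = v - norm (x - y)"
      using \<open>l \<in> L\<close> unfolding L_def by blast
    have "v + v' \<le> norm (x + x')"
      using assms norming_graph_add[OF assms xv(1) that(2)] norming_graph_le_norm by blast
    also have "\<dots> \<le> norm (x - y) + norm (x' + y)"
      using norm_triangle_ineq[of "x - y" "x' + y"] by simp
    finally show ?thesis using xv(2) by simp
  qed
  have "L \<noteq> {}"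
    using norming_graph_base[OF assms] unfolding L_def by blast
  moreover have "bdd_above L"
    using sep norming_graph_base[OF assms] by (meson bdd_aboveI)
  ultimately show ?thesis
  proof (intro that[of "Sup L"])
    show "v - norm (x - y) \<le> Sup L" if "(x, v) \<in> G" for x v
      using that \<open>bdd_above L\<close> unfolding L_def by (blast intro: cSup_upper)
    show "Sup L \<le> norm (x + y) - v" if "(x, v) \<in> G" for x v
      using that \<open>L \<noteq> {}\<close> sep by (blast intro: cSup_least)
  qed
qed

lemma norming_graph_extension_le_norm:
  assumes G: "norming_graph h G" and xv: "(x, v) \<in> G"
    and lower: "\<And>x v. (x, v) \<in> G \<Longrightarrow> v - norm (x - y) \<le> a"
    and upper: "\<And>x v. (x, v) \<in> G \<Longrightarrow> a \<le> norm (x + y) - v"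
  shows "v + c * a \<le> norm (x + c *\<^sub>R y)"
proof (cases c "0::real" rule: linorder_cases)
  case equal
  then show ?thesis using norming_graph_le_norm[OF G xv] by simp
next
  case greater
  have "a \<le> norm (inverse c *\<^sub>R x + y) - inverse c * v"
    using upper norming_graph_scaleR[OF G xv] by blast
  then have "c * a \<le> c * (norm (inverse c *\<^sub>R x + y) - inverse c * v)"
    using greater by (simp add: mult_left_mono)
  also have "\<dots> = norm (c *\<^sub>R (inverse c *\<^sub>R x + y)) - v"
    using greater by (simp add: right_diff_distrib)
  also have "c *\<^sub>R (inverse c *\<^sub>R x + y) = x + c *\<^sub>R y"
    using greater by (simp add: algebra_simps)
  finally show ?thesis by simp
next
  case less
  have "- inverse c * v - norm (- inverse c *\<^sub>R x - y) \<le> a"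
    using lower norming_graph_scaleR[OF G xv] by blast
  then have "- c * (- inverse c * v - norm (- inverse c *\<^sub>R x - y)) \<le> - c * a"
    using less by (simp add: mult_left_mono)
  moreover have "- c * norm (- inverse c *\<^sub>R x - y) = norm (- c *\<^sub>R (- inverse c *\<^sub>R x - y))"
    using less by simp
  moreover have "- c *\<^sub>R (- inverse c *\<^sub>R x - y) = x + c *\<^sub>R y"
    using less by (simp add: algebra_simps)
  ultimately show ?thesis
    using less by (simp add: algebra_simps)
qed

definition graph_extend :: "('a::real_vector \<times> real) set \<Rightarrow> 'a \<Rightarrow> real \<Rightarrow> ('a \<times> real) set" where
  "graph_extend G y a = {(x + c *\<^sub>R y, v + c * a) | x v c. (x, v) \<in> G}"

lemma graph_extendI: "(x, v) \<in> G \<Longrightarrow> (x + c *\<^sub>R y, v + c * a) \<in> graph_extend G y a"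
  unfolding graph_extend_def by blast

lemma graph_extend_unique:
  assumes G: "norming_graph h G" and y: "y \<notin> fst ` G"
    and "(z, b1) \<in> graph_extend G y a" "(z, b2) \<in> graph_extend G y a"
  shows "b1 = b2"
proof -
  from assms(3,4) obtain x1 v1 c1 x2 v2 c2
    where 1: "(x1, v1) \<in> G" "z = x1 + c1 *\<^sub>R y" "b1 = v1 + c1 * a"
    and 2: "(x2, v2) \<in> G" "z = x2 + c2 *\<^sub>R y" "b2 = v2 + c2 * a"
    unfolding graph_extend_def by blast
  have diff: "(x2 + (-1) *\<^sub>R x1, v2 + (-1) * v1) \<in> G"
    using G 1(1) 2(1) norming_graph_add norming_graph_scaleR by blast
  have "c1 = c2"
  proof (rule ccontr)
    assume "c1 \<noteq> c2"
    have "(c1 - c2) *\<^sub>R y = x2 + (-1) *\<^sub>R x1"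
      using 1(2) 2(2) by (simp add: algebra_simps)
    then have "y = inverse (c1 - c2) *\<^sub>R (x2 + (-1) *\<^sub>R x1)"
      using \<open>c1 \<noteq> c2\<close> by (metis divideR_right eq_iff_diff_eq_0 scaleR_conv_of_real)
    then show False
      using y norming_graph_scaleR[OF G diff] by force
  qed
  then show ?thesis
    using 1 2 norming_graph_unique[OF G] by auto
qed

lemma norming_graph_graph_extend:
  assumes G: "norming_graph h G" and y: "y \<notin> fst ` G"
    and lower: "\<And>x v. (x, v) \<in> G \<Longrightarrow> v - norm (x - y) \<le> a"
    and upper: "\<And>x v. (x, v) \<in> G \<Longrightarrow> a \<le> norm (x + y) - v"
  shows "norming_graph h (graph_extend G y a)"
  unfolding norming_graph_def
proof (intro conjI allI impI)
  show "b1 = b2" if "(z, b1) \<in> graph_extend G y a" "(z, b2) \<in> graph_extend G y a" for z b1 b2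
    using graph_extend_unique[OF G y that] .
  show "(z1 + z2, b1 + b2) \<in> graph_extend G y a"
    if "(z1, b1) \<in> graph_extend G y a" "(z2, b2) \<in> graph_extend G y a" for z1 b1 z2 b2
  proof -
    from that obtain x1 v1 c1 x2 v2 c2
      where "(x1, v1) \<in> G" "z1 = x1 + c1 *\<^sub>R y" "b1 = v1 + c1 * a"
      and "(x2, v2) \<in> G" "z2 = x2 + c2 *\<^sub>R y" "b2 = v2 + c2 * a"
      unfolding graph_extend_def by blast
    then show ?thesis
      using graph_extendI[OF norming_graph_add[OF G], of x1 v1 x2 v2 "c1 + c2"]
      by (simp add: algebra_simps)
  qed
  show "(d *\<^sub>R z, d * b) \<in> graph_extend G y a" if "(z, b) \<in> graph_extend G y a" for z b d
  proof -
    from that obtain x v c where "(x, v) \<in> G" "z = x + c *\<^sub>R y" "b = v + c * a"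
      unfolding graph_extend_def by blast
    then show ?thesis
      using graph_extendI[OF norming_graph_scaleR[OF G], of x v d "d * c"]
      by (simp add: algebra_simps)
  qed
  show "b \<le> norm z" if "(z, b) \<in> graph_extend G y a" for z b
    using that norming_graph_extension_le_norm[OF G _ lower upper]
    unfolding graph_extend_def by blast
  show "(h, norm h) \<in> graph_extend G y a"
    using graph_extendI[OF norming_graph_base[OF G], of 0] by simp
qed

lemma norming_graph_extend:
  assumes G: "norming_graph h G" and y: "y \<notin> fst ` G"
  obtains G' where "norming_graph h G'" "G \<subset> G'"
proof -
  obtain a where "\<And>x v. (x, v) \<in> G \<Longrightarrow> v - norm (x - y) \<le> a"
    and "\<And>x v. (x, v) \<in> G \<Longrightarrow> a \<le> norm (x + y) - v"
    using norming_graph_extension_value[OF G] by blast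
  then have "norming_graph h (graph_extend G y a)"
    using norming_graph_graph_extend[OF G y] by blast
  moreover have "G \<subseteq> graph_extend G y a"
    using graph_extendI[of _ _ G 0] by auto
  moreover have "(0, 0) \<in> G"
    using norming_graph_scaleR[OF G norming_graph_base[OF G], of 0] by simp
  then have "(y, a) \<in> graph_extend G y a"
    using graph_extendI[of 0 0 G 1] by simp
  then have "graph_extend G y a \<noteq> G"
    using y by force
  ultimately show ?thesis
    using that by blast
qed

text \<open>Hahn--Banach, by Zorn's lemma on norming graphs.\<close>

lemma exists_norming_functional:
  fixes h :: "'a::real_normed_vector"
  obtains g :: "'a \<Rightarrow>\<^sub>L real" where "norm g \<le> 1" "blinfun_apply g h = norm h"
proof -
  have "\<exists>M\<in>{G. norming_graph h G}. \<forall>G\<in>{G. norming_graph h G}. M \<subseteq> G \<longrightarrow> G = M"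
    by (rule subset_Zorn_nonempty) (use norming_graph_span norming_graph_Union_chain in blast)+
  then obtain M where M: "norming_graph h M"
    and maximal: "\<And>G. norming_graph h G \<Longrightarrow> M \<subseteq> G \<Longrightarrow> G = M"
    by blast
  have total: "x \<in> fst ` M" for x
    using norming_graph_extend[OF M, of x] maximal by (metis psubset_eq)
  define g where "g x = (THE v. (x, v) \<in> M)" for x
  have g_eq: "g x = v" if "(x, v) \<in> M" for x v
    unfolding g_def by (rule the_equality) (use that norming_graph_unique[OF M] in blast)+
  have graph: "(x, g x) \<in> M" for x
  proof -
    obtain v where "(x, v) \<in> M"
      using total[of x] by force
    then show ?thesis
      using g_eq by simp
  qed
  have g_le: "\<bar>g x\<bar> \<le> norm x" for x
    using norming_graph_le_norm[OF M graph[of x]]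
      norming_graph_le_norm[OF M norming_graph_scaleR[OF M graph[of x], of "-1"]] by simp
  have "bounded_linear g"
  proof (rule bounded_linear_intro[where K = 1])
    show "g (x + y) = g x + g y" for x y
      using g_eq norming_graph_add[OF M graph graph] by blast
    show "g (r *\<^sub>R x) = r *\<^sub>R g x" for r x
      using g_eq norming_graph_scaleR[OF M graph] by simp
    show "norm (g x) \<le> norm x * 1" for x
      using g_le[of x] by simp
  qed
  then show ?thesis
    using g_le g_eq[OF norming_graph_base[OF M]]
    by (intro that[of "Blinfun g"]) (auto intro!: norm_blinfun_bound simp: bounded_linear_Blinfun_apply)
qed

lemma conjugate_exponents:
  fixes p q :: real
  assumes "p > 1" "q > 1" "1 / p + 1 / q = 1"
  shows "p / q = p - 1" "q / p = q - 1" "(p - 1) * q = p" "(p - 1) * (q - 1) = 1"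
proof -
  have pq: "p * q = p + q"
    using assms by (simp add: field_simps)
  show p1q: "(p - 1) * q = p" and "(p - 1) * (q - 1) = 1"
    using pq by (simp_all add: algebra_simps)
  show "p / q = p - 1"
    using p1q assms(2) by (simp add: field_simps)
  show "q / p = q - 1"
    using pq assms(1) by (simp add: field_simps)
qed

lemma mult_powr_minus_one: "0 \<le> x \<Longrightarrow> x * x powr (r - 1) = x powr (r::real)"
  using powr_mult_base[of x "r - 1"] by simp

lemma subdiff_zero_imp_le: "0 \<in> subdiff f xbar \<Longrightarrow> f xbar \<le> f y"
  unfolding subdiff_def by simp

lemma proper_fun_subdiff_zero_finite:
  assumes "proper_fun f" "0 \<in> subdiff f xbar"
  obtains m where "f xbar = ereal m"
proof -
  obtain z where "f z \<noteq> \<infinity>"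
    using assms(1) unfolding proper_fun_def by blast
  then have "f xbar \<noteq> \<infinity>"
    using subdiff_zero_imp_le[OF assms(2), of z] by auto
  moreover have "f xbar \<noteq> -\<infinity>"
    using assms(1) unfolding proper_fun_def by blast
  ultimately show ?thesis
    using that by (cases "f xbar") auto
qed

lemma subgradient_lower_bound:
  fixes f :: "'a::real_normed_vector \<Rightarrow> ereal"
  assumes "proper_fun f" "0 \<in> subdiff f xbar" "\<eta> \<in> subdiff f y"
    and near: "norm (y - xbar) \<le> \<kappa> * norm \<eta> powr (q - 1)" and "0 \<le> \<kappa>"
  shows "f xbar + ereal (blinfun_apply \<eta> (x - xbar) - \<kappa> * norm \<eta> powr q) \<le> f x"
proof (cases "f x")
  case (real a)
  obtain m where m: "f xbar = ereal m"
    using proper_fun_subdiff_zero_finite[OF assms(1,2)] .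
  have "f y - ereal (blinfun_apply \<eta> y) \<le> f x - ereal (blinfun_apply \<eta> x)"
    using assms(3) unfolding subdiff_def by blast
  then have "f y - ereal (blinfun_apply \<eta> y) \<le> ereal (a - blinfun_apply \<eta> x)"
    using real by simp
  moreover have "f y \<noteq> -\<infinity>"
    using assms(1) unfolding proper_fun_def by blast
  ultimately obtain b where b: "f y = ereal b" "b - blinfun_apply \<eta> y \<le> a - blinfun_apply \<eta> x"
    by (cases "f y") auto
  have "m \<le> b"
    using subdiff_zero_imp_le[OF assms(2), of y] m b(1) by simp
  have "blinfun_apply \<eta> (y - xbar) \<le> norm \<eta> * norm (y - xbar)"
    using norm_blinfun[of \<eta> "y - xbar"] by simp
  also have "\<dots> \<le> norm \<eta> * (\<kappa> * norm \<eta> powr (q - 1))"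
    using near by (simp add: mult_left_mono)
  also have "\<dots> = \<kappa> * norm \<eta> powr q"
    by (simp add: mult_powr_minus_one)
  finally show ?thesis
    using b \<open>m \<le> b\<close> real m by (simp add: blinfun.diff_right)
qed (use assms(1) in \<open>auto simp: proper_fun_def\<close>)

definition localized_subgradients ::
  "('a::real_normed_vector \<Rightarrow> ereal) \<Rightarrow> 'a \<Rightarrow> real \<Rightarrow> real \<Rightarrow> ('a \<Rightarrow>\<^sub>L real) set" where
  "localized_subgradients f xbar \<kappa> r = {\<eta>. \<exists>y. \<eta> \<in> subdiff f y \<and> norm (y - xbar) \<le> \<kappa> * norm \<eta> powr r}"

lemma subgradient_lower_bound_closure:
  fixes f :: "'a::real_normed_vector \<Rightarrow> ereal"
  assumes "proper_fun f" "0 \<in> subdiff f xbar" "0 < q" "0 \<le> \<kappa>"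
    and "\<xi> \<in> closure (localized_subgradients f xbar \<kappa> (q - 1))"
  shows "f xbar + ereal (blinfun_apply \<xi> (x - xbar) - \<kappa> * norm \<xi> powr q) \<le> f x"
proof (cases "f x")
  case (real a)
  obtain m where m: "f xbar = ereal m"
    using proper_fun_subdiff_zero_finite[OF assms(1,2)] .
  have "continuous_on UNIV (\<lambda>\<eta>::'a \<Rightarrow>\<^sub>L real. norm \<eta> powr q)"
    by (rule continuous_on_powr') (use \<open>0 < q\<close> in \<open>auto intro!: continuous_intros\<close>)
  moreover have "continuous_on UNIV (\<lambda>\<eta>::'a \<Rightarrow>\<^sub>L real. blinfun_apply \<eta> (x - xbar))"
    by (intro continuous_intros)
  ultimately have "closed {\<eta>. m + (blinfun_apply \<eta> (x - xbar) - \<kappa> * norm \<eta> powr q) \<le> a}"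
    by (intro closed_Collect_le continuous_on_add continuous_on_diff continuous_on_mult
        continuous_on_const)
  moreover have "localized_subgradients f xbar \<kappa> (q - 1)
      \<subseteq> {\<eta>. m + (blinfun_apply \<eta> (x - xbar) - \<kappa> * norm \<eta> powr q) \<le> a}"
    using subgradient_lower_bound[OF assms(1,2) _ _ assms(4), of _ _ q x] m real
    unfolding localized_subgradients_def by force
  ultimately have "m + (blinfun_apply \<xi> (x - xbar) - \<kappa> * norm \<xi> powr q) \<le> a"
    using assms(5) closure_minimal by blast
  then show ?thesis
    using m real by simp
qed (use assms(1) in \<open>auto simp: proper_fun_def\<close>)

text \<open>The concave function t \<mapsto> t r - \<kappa> t^q attains its maximum at t = (r / (q \<kappa>))^(p-1);
  the slightly suboptimal choice below keeps the constants of the paper.\<close>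

lemma growth_value_at_threshold:
  fixes p q \<kappa> r :: real
  assumes "p > 1" "q > 1" "1 / p + 1 / q = 1" "\<kappa> > 0" "r \<ge> 0"
  shows "(r / (2 * \<kappa>)) powr (p - 1) * r - \<kappa> * ((r / (2 * \<kappa>)) powr (p - 1)) powr q
      = r powr p / (2 * (2 * \<kappa>) powr (p - 1))"
proof -
  define s where "s = r / (2 * \<kappa>)"
  have "s \<ge> 0" "r = 2 * \<kappa> * s"
    using assms(4,5) by (simp_all add: s_def)
  have "s powr (p - 1) * r = 2 * \<kappa> * s powr p"
    using \<open>s \<ge> 0\<close> mult_powr_minus_one[of s p] unfolding \<open>r = 2 * \<kappa> * s\<close> by (simp add: ac_simps)
  moreover have "(s powr (p - 1)) powr q = s powr p"
    using conjugate_exponents(3)[OF assms(1-3)] by (simp add: powr_powr)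
  moreover have "r powr p = 2 * \<kappa> * (2 * \<kappa>) powr (p - 1) * s powr p"
    using \<open>s \<ge> 0\<close> assms(4) mult_powr_minus_one[of "2 * \<kappa>" p]
    unfolding \<open>r = 2 * \<kappa> * s\<close> by (simp add: powr_mult)
  ultimately show ?thesis
    using assms(4) unfolding s_def[symmetric] by (simp add: field_simps)
qed

lemma growth_value_below_threshold:
  fixes p q \<kappa> r b :: real
  assumes "p > 1" "q > 1" "1 / p + 1 / q = 1" "\<kappa> > 0" "r \<ge> 0"
    and "0 \<le> b" "b \<le> (r / (2 * \<kappa>)) powr (p - 1)"
  shows "b * r / 2 \<le> b * r - \<kappa> * b powr q"
proof -
  have "b powr (q - 1) \<le> ((r / (2 * \<kappa>)) powr (p - 1)) powr (q - 1)"
    using assms by (intro powr_mono2) auto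
  also have "\<dots> = r / (2 * \<kappa>)"
    using conjugate_exponents(4)[OF assms(1-3)] assms(4,5) by (simp add: powr_powr)
  finally have "b * b powr (q - 1) \<le> b * (r / (2 * \<kappa>))"
    using assms(6) by (rule mult_left_mono)
  then have "\<kappa> * b powr q \<le> b * r / 2"
    using assms(4,6) mult_powr_minus_one[of b q] by (simp add: field_simps)
  then show ?thesis
    by simp
qed

lemma growth_constant_bound:
  fixes r \<delta> \<kappa> p q D :: real and \<beta> :: ereal
  assumes "p > 1" "q > 1" "1 / p + 1 / q = 1"
    and "0 \<le> r" "r \<le> \<delta>" "\<kappa> > 0" "\<beta> > 0" "\<delta> > 0"
    and bound: "\<And>t. 0 \<le> t \<Longrightarrow> ereal t \<le> \<beta> \<Longrightarrow> t * r - \<kappa> * t powr q \<le> D"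
  shows "1 / 2 * (case \<beta> of ereal b \<Rightarrow> min (b / \<delta> powr (p / q)) (1 / (2 * \<kappa>) powr (p / q))
                           | _ \<Rightarrow> 1 / (2 * \<kappa>) powr (p / q)) * r powr p \<le> D"
    (is "1 / 2 * ?C * r powr p \<le> D")
proof -
  note pq = conjugate_exponents(1)[OF assms(1-3)]
  define t where "t = (r / (2 * \<kappa>)) powr (p - 1)"
  show ?thesis
  proof (cases "ereal t \<le> \<beta>")
    case True
    have "?C \<le> 1 / (2 * \<kappa>) powr (p - 1)"
      unfolding pq by (cases \<beta>) auto
    then have "1 / 2 * ?C * r powr p \<le> 1 / 2 * (1 / (2 * \<kappa>) powr (p - 1)) * r powr p"
      by (intro mult_right_mono mult_left_mono) auto
    also have "\<dots> = r powr p / (2 * (2 * \<kappa>) powr (p - 1))"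
      by simp
    also have "\<dots> \<le> D"
      using bound[OF _ True] growth_value_at_threshold[OF assms(1-3,6,4)] unfolding t_def by simp
    finally show ?thesis .
  next
    case False
    then obtain b where b: "\<beta> = ereal b" "0 < b" "b < t"
      using assms(7) by (cases \<beta>) auto
    have "r powr (p - 1) \<le> \<delta> powr (p - 1)"
      using assms(1,4,5) by (intro powr_mono2) auto
    then have "r powr p \<le> r * \<delta> powr (p - 1)"
      using mult_powr_minus_one[of r p] assms(4) by (metis mult_left_mono)
    have "?C \<le> b / \<delta> powr (p - 1)"
      using b(1) unfolding pq by simp
    then have "1 / 2 * ?C * r powr p \<le> 1 / 2 * (b / \<delta> powr (p - 1)) * r powr p"
      by (intro mult_right_mono mult_left_mono) auto
    also have "\<dots> \<le> 1 / 2 * (b / \<delta> powr (p - 1)) * (r * \<delta> powr (p - 1))"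
      using \<open>r powr p \<le> r * \<delta> powr (p - 1)\<close> b(2) by (intro mult_left_mono) auto
    also have "\<dots> = b * r / 2"
      using assms(8) by simp
    also have "\<dots> \<le> b * r - \<kappa> * b powr q"
      using growth_value_below_threshold[OF assms(1-3,6,4)] b unfolding t_def by simp
    also have "\<dots> \<le> D"
      using bound b by simp
    finally show ?thesis .
  qed
qed

lemma growth_of_dense_localized_subgradients:
  fixes f :: "'a::real_normed_vector \<Rightarrow> ereal" and W :: "('a \<Rightarrow>\<^sub>L real) set"
  assumes f: "proper_fun f" "0 \<in> subdiff f xbar"
    and pq: "p > 1" "q > 1" "1 / p + 1 / q = 1"
    and "\<beta> > 0" "\<kappa> > 0" "ecball 0 \<beta> \<subseteq> closure W"
    and W: "\<forall>\<xi>\<in>W. \<exists>y. \<xi> \<in> subdiff f y \<and> norm (y - xbar) \<le> \<kappa> * norm \<xi> powr (q / p)"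
    and "\<delta> > 0" "x \<in> ecball xbar (ereal \<delta>)"
  shows "f xbar + ereal (1 / 2 *
           (case \<beta> of ereal b \<Rightarrow> min (b / \<delta> powr (p / q)) (1 / (2 * \<kappa>) powr (p / q))
                    | _ \<Rightarrow> 1 / (2 * \<kappa>) powr (p / q))
           * norm (x - xbar) powr p) \<le> f x"
proof (cases "f x")
  case (real a)
  obtain m where m: "f xbar = ereal m"
    using proper_fun_subdiff_zero_finite[OF f] .
  obtain g :: "'a \<Rightarrow>\<^sub>L real" where g: "norm g \<le> 1" "blinfun_apply g (x - xbar) = norm (x - xbar)"
    using exists_norming_functional .
  have "W \<subseteq> localized_subgradients f xbar \<kappa> (q - 1)"
    using W conjugate_exponents(2)[OF pq] unfolding localized_subgradients_def by auto
  then have closure_W: "closure W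
      \<subseteq> closure (localized_subgradients f xbar \<kappa> (q - 1))"
    by (rule closure_mono)
  have "norm (x - xbar) \<le> \<delta>"
    using \<open>x \<in> ecball xbar (ereal \<delta>)\<close> unfolding ecball_def by simp
  moreover have "t * norm (x - xbar) - \<kappa> * t powr q \<le> a - m" if "0 \<le> t" "ereal t \<le> \<beta>" for t
  proof -
    have "norm (t *\<^sub>R g) \<le> t"
      using g(1) \<open>0 \<le> t\<close> by (simp add: mult_left_le)
    then have "ereal (norm (t *\<^sub>R g - 0)) \<le> \<beta>"
      using that(2) by (metis diff_zero ereal_less_eq(3) order_trans)
    then have "t *\<^sub>R g \<in> closure (localized_subgradients f xbar \<kappa> (q - 1))"
      using closure_W \<open>ecball 0 \<beta> \<subseteq> closure W\<close> unfolding ecball_def by blast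
    from subgradient_lower_bound_closure[OF f _ _ this, of x] pq(2) \<open>\<kappa> > 0\<close> g(2) m real
    have "m + (t * norm (x - xbar) - \<kappa> * norm (t *\<^sub>R g) powr q) \<le> a"
      by (simp del: norm_scaleR add: scaleR_blinfun.rep_eq)
    moreover have "\<kappa> * norm (t *\<^sub>R g) powr q \<le> \<kappa> * t powr q"
      using \<open>norm (t *\<^sub>R g) \<le> t\<close> pq(2) \<open>\<kappa> > 0\<close> by (intro mult_left_mono powr_mono2) auto
    ultimately show ?thesis
      by linarith
  qed
  ultimately have "1 / 2 *
           (case \<beta> of ereal b \<Rightarrow> min (b / \<delta> powr (p / q)) (1 / (2 * \<kappa>) powr (p / q))
                    | _ \<Rightarrow> 1 / (2 * \<kappa>) powr (p / q))
           * norm (x - xbar) powr p \<le> a - m"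
    by (rule growth_constant_bound[OF pq norm_ge_zero _ \<open>\<kappa> > 0\<close> \<open>\<beta> > 0\<close> \<open>\<delta> > 0\<close>])
  then show ?thesis
    using m real by simp
qed (use f in \<open>auto simp: proper_fun_def\<close>)

lemma dual_map_apply_self:
  fixes p q :: real
  assumes "\<xi> \<in> dual_map p z" "p > 1" "q > 1" "1 / p + 1 / q = 1"
  shows "blinfun_apply \<xi> z = norm z powr p" "norm \<xi> powr q = norm z powr p"
proof -
  have \<xi>: "blinfun_apply \<xi> z = norm \<xi> * norm z" "norm \<xi> = norm z powr (p - 1)"
    using assms(1) unfolding dual_map_def by auto
  show "blinfun_apply \<xi> z = norm z powr p"
    using mult_powr_minus_one[of "norm z" p] unfolding \<xi> by (simp add: mult.commute)
  show "norm \<xi> powr q = norm z powr p"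
    using conjugate_exponents(3)[OF assms(2-4)] unfolding \<xi>(2) by (simp add: powr_powr)
qed

lemma strongly_subregular_le:
  assumes "strongly_subregular F xbar l \<alpha> \<kappa>" "y \<in> ecball xbar \<alpha>" "\<eta> \<in> F y" "0 \<le> l"
  shows "norm (y - xbar) \<le> \<kappa> * norm \<eta> powr l"
proof -
  have "dist0 F y \<le> ereal (norm \<eta>)" "0 \<le> dist0 F y"
    unfolding dist0_def using assms(3) by (auto intro: INF_lower INF_greatest)
  then obtain d where d: "dist0 F y = ereal d" "0 \<le> d" "d \<le> norm \<eta>"
    by (cases "dist0 F y") auto
  have "ereal (norm (y - xbar)) \<le> ereal \<kappa> * epowr (dist0 F y) l"
    using assms(1,2) unfolding strongly_subregular_def by blast
  then have "norm (y - xbar) \<le> \<kappa> * d powr l"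
    using d(1) unfolding epowr_def by simp
  also have "\<dots> \<le> \<kappa> * norm \<eta> powr l"
    using assms(1,4) d unfolding strongly_subregular_def by (intro mult_left_mono powr_mono2) auto
  finally show ?thesis .
qed

lemma growth_of_strongly_subregular_subdiff:
  fixes f :: "'a::real_normed_vector \<Rightarrow> ereal"
  assumes f: "proper_fun f" "0 \<in> subdiff f xbar"
    and pq: "p > 1" "q > 1" "1 / p + 1 / q = 1"
    and regular: "strongly_subregular (subdiff f) xbar (q / p) \<alpha> \<kappa>"
    and x: "x \<in> (\<lambda>z. xbar + (2 * \<kappa>) *\<^sub>R z) ` dual_map_inv p (closure (\<Union>y\<in>ecball xbar \<alpha>. subdiff f y))"
  shows "f xbar + ereal (1 / (2 * (2 * \<kappa>) powr (p / q)) * norm (x - xbar) powr p) \<le> f x"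
proof -
  note exponents = conjugate_exponents[OF pq]
  have "\<kappa> > 0"
    using regular unfolding strongly_subregular_def by simp
  obtain z \<xi> where z: "x = xbar + (2 * \<kappa>) *\<^sub>R z" and "\<xi> \<in> dual_map p z"
    and \<xi>: "\<xi> \<in> closure (\<Union>y\<in>ecball xbar \<alpha>. subdiff f y)"
    using x unfolding dual_map_inv_def by blast
  have "(\<Union>y\<in>ecball xbar \<alpha>. subdiff f y)
      \<subseteq> localized_subgradients f xbar \<kappa> (q - 1)"
    using strongly_subregular_le[OF regular] exponents(2) pq
    unfolding localized_subgradients_def by fastforce
  then have "\<xi> \<in> closure (localized_subgradients f xbar \<kappa> (q - 1))"
    using \<xi> closure_mono by blast
  then have "f xbar + ereal (blinfun_apply \<xi> (x - xbar) - \<kappa> * norm \<xi> powr q) \<le> f x"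
    using subgradient_lower_bound_closure[OF f] pq(2) \<open>\<kappa> > 0\<close> by simp
  moreover have "blinfun_apply \<xi> (x - xbar) - \<kappa> * norm \<xi> powr q = \<kappa> * norm z powr p"
    using dual_map_apply_self[OF \<open>\<xi> \<in> dual_map p z\<close> pq] unfolding z
    by (simp add: blinfun.scaleR_right)
  moreover have "1 / (2 * (2 * \<kappa>) powr (p / q)) * norm (x - xbar) powr p = \<kappa> * norm z powr p"
    using \<open>\<kappa> > 0\<close> mult_powr_minus_one[of "2 * \<kappa>" p] unfolding z exponents(1)
    by (simp add: powr_mult field_simps)
  ultimately show ?thesis
    by simp
qed

theorem theorem4p1:
  fixes f :: "'a::real_normed_vector \<Rightarrow> ereal" and xbar :: 'a and p q :: real
  assumes "proper_fun f"
    and "0 \<in> subdiff f xbar"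
    and "p > 1" and "q > 1" and "1 / p + 1 / q = 1"
  shows
    "(\<forall>(\<beta>::ereal) (\<kappa>::real) (W :: ('a \<Rightarrow>\<^sub>L real) set).
        \<beta> > 0 \<and> \<kappa> > 0 \<and> W \<subseteq> ecball 0 \<beta> \<and> ecball 0 \<beta> \<subseteq> closure W \<and>
        (\<forall>\<xi>\<in>W. \<exists>x. \<xi> \<in> subdiff f x \<and> norm (x - xbar) \<le> \<kappa> * norm \<xi> powr (q / p))
      \<longrightarrow> (\<forall>\<delta>::real. \<delta> > 0 \<longrightarrow>
            (\<forall>x\<in>ecball xbar (ereal \<delta>).
               f x \<ge> f xbar + ereal (1 / 2 *
                  (case \<beta> of ereal b \<Rightarrow> min (b / \<delta> powr (p / q)) (1 / (2 * \<kappa>) powr (p / q))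
                           | _ \<Rightarrow> 1 / (2 * \<kappa>) powr (p / q))
                  * norm (x - xbar) powr p))))
     \<and>
     (\<forall>(\<alpha>::ereal) (\<kappa>::real).
        strongly_subregular (subdiff f) xbar (q / p) \<alpha> \<kappa>
      \<longrightarrow> (\<forall>x \<in> (\<lambda>z. xbar + (2 * \<kappa>) *\<^sub>R z) `
                   dual_map_inv p (closure (\<Union>y\<in>ecball xbar \<alpha>. subdiff f y)).
            f x \<ge> f xbar + ereal (1 / (2 * (2 * \<kappa>) powr (p / q)) * norm (x - xbar) powr p)))"
  using growth_of_dense_localized_subgradients[OF assms] growth_of_strongly_subregular_subdiff[OF assms]
  by blast

end
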